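(* Let $C,D$ be sets and let $\bot:=CD\mathcal y$ be the $(C\mathcal y,D\mathcal y)$-bicomodule corresponding to the terminal span $C\leftarrow C\times D\to D$. The operation $m\mapsto m^\vee:=[m,\bot]_{C\mathcal y,D\mathcal y}$ restricts to mutually inverse equivalences between the category of conjunctive $(C\mathcal y,D\mathcal y)$-bicomodules and the opposite of the category of linear $(C\mathcal y,D\mathcal y)$-bicomodules. Explicitly, for a span $C\leftarrow M\to D$ with fibers $M_a$ over $a\in C$ (each a set over $D$), $$\Big(\sum_{a\in C}M_a\mathcal y\Big)^\vee\cong\sum_{a\in C}\mathcal y^{M_a}\qquad\text{and}\qquad\Big(\sum_{a\in C}\mathcal y^{M_a}\Big)^\vee\cong\sum_{a\in C}M_a\mathcal y.$$
   Context: Bicomodules between discrete categories $C\mathcal y,D\mathcal y$ (comonoids in $(\mathbf{Poly},\mathcal y,\triangleleft)$ with linear carrier) are polynomials $m$ with compatible coactions; a linear one $M\mathcal y$ is a span $C\leftarrow M\to D$ (corresponding prafunctor $\Sigma\Delta$), a conjunctive one has exactly one position over each $a\in C$, i.e. is $\sum_{a\in C}\mathcal y^{m[a]}$ with each $m[a]$ a set over $D$ (corresponding prafunctor $\Pi\Delta$). For such bicomodules $q,r$, the local internal hom is $[q,r]_{C\mathcal y,D\mathcal y}:=\sum_{a\in C}\sum_{\varphi\in\mathbf{Set}[D](q_a,r_a)}\mathcal y^{\sum_{j\in q_a(1)}r[\varphi(j)]}$, where $q_a$ is the summand over $a$, $\mathbf{Set}[D](q_a,r_a)$ is the set of natural transformations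 between the associated functors $D\text{-}\mathbf{Set}\to\mathbf{Set}$, $X\mapsto\sum_{j\in q_a(1)}D\text{-}\mathbf{Set}(q[j],X)$, and $\varphi(j)$ is the image position. It is contravariant in $q$. *)

theory Defs
  imports Main
begin

text \<open>Bicomodules between discrete categories C y and D y (C :: 'c set, D :: 'd set).
  Such a bicomodule is a polynomial whose positions lie over elements a of C and whose
  directions are labelled by elements of D.\<close>

record ('c, 'p, 'e, 'd) bicomod =
  pos :: "'c \<Rightarrow> 'p set"
  dir :: "'c \<Rightarrow> 'p \<Rightarrow> 'e set"
  lab :: "'c \<Rightarrow> 'p \<Rightarrow> 'e \<Rightarrow> 'd"

definition wf_bicomod :: "'c set \<Rightarrow> 'd set \<Rightarrow> ('c, 'p, 'e, 'd) bicomod \<Rightarrow> bool" where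
  "wf_bicomod C D m \<longleftrightarrow>
     (\<forall>a. a \<notin> C \<longrightarrow> pos m a = {}) \<and>
     (\<forall>a\<in>C. \<forall>i\<in>pos m a. \<forall>e\<in>dir m a i. lab m a i e \<in> D)"

definition lin_bicomod :: "'c set \<Rightarrow> 'd set \<Rightarrow> ('c, 'p, 'e, 'd) bicomod \<Rightarrow> bool" where
  "lin_bicomod C D m \<longleftrightarrow> wf_bicomod C D m \<and>
     (\<forall>a\<in>C. \<forall>i\<in>pos m a. \<exists>!e. e \<in> dir m a i)"

definition conj_bicomod :: "'c set \<Rightarrow> 'd set \<Rightarrow> ('c, 'p, 'e, 'd) bicomod \<Rightarrow> bool" where
  "conj_bicomod C D m \<longleftrightarrow> wf_bicomod C D m \<and> (\<forall>a\<in>C. \<exists>!i. i \<in> pos m a)"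

text \<open>Set[D](q_a, r_a): morphisms of the polynomials q_a, r_a over D (forward map on
  positions, backward label-preserving maps on directions), i.e. natural transformations
  between the associated functors D-Set -> Set in their (Yoneda) polynomial form.
  Stored extensionally (undefined outside the relevant domains), so that equality of
  such morphisms is plain equality.\<close>
definition natD :: "('c, 'p, 'e, 'd) bicomod \<Rightarrow> ('c, 'q, 'f, 'd) bicomod \<Rightarrow> 'c
                     \<Rightarrow> (('p \<Rightarrow> 'q) \<times> ('p \<Rightarrow> 'f \<Rightarrow> 'e)) set" where
  "natD q r a = {(f, g).
      (\<forall>i\<in>pos q a. f i \<in> pos r a \<and>
          (\<forall>e\<in>dir r a (f i). g i e \<in> dir q a i \<and> lab q a i (g i e) = lab r a (f i) e)) \<and>
      (\<forall>i. i \<notin> pos q a \<longrightarrow> f i = undefined \<and> g i = undefined) \<and>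
      (\<forall>i\<in>pos q a. \<forall>e. e \<notin> dir r a (f i) \<longrightarrow> g i e = undefined)}"

definition ihom :: "'c set \<Rightarrow> ('c, 'p, 'e, 'd) bicomod \<Rightarrow> ('c, 'q, 'f, 'd) bicomod
     \<Rightarrow> ('c, ('p \<Rightarrow> 'q) \<times> ('p \<Rightarrow> 'f \<Rightarrow> 'e), 'p \<times> 'f, 'd) bicomod" where
  "ihom C q r = \<lparr> pos = (\<lambda>a. if a \<in> C then natD q r a else {}),
                  dir = (\<lambda>a \<phi>. {(i, e). i \<in> pos q a \<and> e \<in> dir r a (fst \<phi> i)}),
                  lab = (\<lambda>a \<phi> ie. lab r a (fst \<phi> (fst ie)) (snd ie)) \<rparr>"

definition bot :: "'c set \<Rightarrow> 'd set \<Rightarrow> ('c, 'd, unit, 'd) bicomod" where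
  "bot C D = \<lparr> pos = (\<lambda>a. if a \<in> C then D else {}),
               dir = (\<lambda>a d. {()}),
               lab = (\<lambda>a d u. d) \<rparr>"

definition dual :: "'c set \<Rightarrow> 'd set \<Rightarrow> ('c, 'p, 'e, 'd) bicomod
     \<Rightarrow> ('c, ('p \<Rightarrow> 'd) \<times> ('p \<Rightarrow> unit \<Rightarrow> 'e), 'p \<times> unit, 'd) bicomod" where
  "dual C D m = ihom C m (bot C D)"

definition mor :: "'c set \<Rightarrow> ('c, 'p, 'e, 'd) bicomod \<Rightarrow> ('c, 'q, 'f, 'd) bicomod
     \<Rightarrow> ('c \<Rightarrow> ('p \<Rightarrow> 'q) \<times> ('p \<Rightarrow> 'f \<Rightarrow> 'e)) \<Rightarrow> bool" where
  "mor C m n F \<longleftrightarrow> (\<forall>a\<in>C. F a \<in> natD m n a)"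

definition eqm :: "'c set \<Rightarrow> ('c \<Rightarrow> 'x) \<Rightarrow> ('c \<Rightarrow> 'x) \<Rightarrow> bool" where
  "eqm C F G \<longleftrightarrow> (\<forall>a\<in>C. F a = G a)"

definition idm :: "('c, 'p, 'e, 'd) bicomod \<Rightarrow> 'c \<Rightarrow> ('p \<Rightarrow> 'p) \<times> ('p \<Rightarrow> 'e \<Rightarrow> 'e)" where
  "idm m = (\<lambda>a. (\<lambda>i. if i \<in> pos m a then i else undefined,
                  \<lambda>i. if i \<in> pos m a then (\<lambda>e. if e \<in> dir m a i then e else undefined)
                      else undefined))"

definition compnat :: "('c, 'p, 'e, 'd) bicomod \<Rightarrow> ('c, 'r, 'g, 'd) bicomod \<Rightarrow> 'c
     \<Rightarrow> ('p \<Rightarrow> 'q) \<times> ('p \<Rightarrow> 'f \<Rightarrow> 'e) \<Rightarrow> ('q \<Rightarrow> 'r) \<times> ('q \<Rightarrow> 'g \<Rightarrow> 'f)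
     \<Rightarrow> ('p \<Rightarrow> 'r) \<times> ('p \<Rightarrow> 'g \<Rightarrow> 'e)" where
  "compnat m p a \<psi> \<phi> =
     (\<lambda>i. if i \<in> pos m a then fst \<phi> (fst \<psi> i) else undefined,
      \<lambda>i. if i \<in> pos m a then
             (\<lambda>e. if e \<in> dir p a (fst \<phi> (fst \<psi> i))
                  then snd \<psi> i (snd \<phi> (fst \<psi> i) e) else undefined)
           else undefined)"

definition compm :: "('c, 'p, 'e, 'd) bicomod \<Rightarrow> ('c, 'r, 'g, 'd) bicomod
     \<Rightarrow> ('c \<Rightarrow> ('q \<Rightarrow> 'r) \<times> ('q \<Rightarrow> 'g \<Rightarrow> 'f)) \<Rightarrow> ('c \<Rightarrow> ('p \<Rightarrow> 'q) \<times> ('p \<Rightarrow> 'f \<Rightarrow> 'e))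
     \<Rightarrow> 'c \<Rightarrow> ('p \<Rightarrow> 'r) \<times> ('p \<Rightarrow> 'g \<Rightarrow> 'e)" where
  "compm m p G F = (\<lambda>a. compnat m p a (F a) (G a))"

definition iso_mor :: "'c set \<Rightarrow> ('c, 'p, 'e, 'd) bicomod \<Rightarrow> ('c, 'q, 'f, 'd) bicomod
     \<Rightarrow> ('c \<Rightarrow> ('p \<Rightarrow> 'q) \<times> ('p \<Rightarrow> 'f \<Rightarrow> 'e)) \<Rightarrow> bool" where
  "iso_mor C m n F \<longleftrightarrow> mor C m n F \<and>
     (\<exists>G. mor C n m G \<and> eqm C (compm m m G F) (idm m) \<and> eqm C (compm n n F G) (idm n))"

text \<open>Action of (-)^vee = [-, bot] on a morphism F : m -> n, giving
  [F, bot] : [n, bot] -> [m, bot] (precomposition with F).\<close>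
definition dual_mor :: "'c set \<Rightarrow> 'd set \<Rightarrow> ('c, 'p, 'e, 'd) bicomod \<Rightarrow> ('c, 'q, 'f, 'd) bicomod
     \<Rightarrow> ('c \<Rightarrow> ('p \<Rightarrow> 'q) \<times> ('p \<Rightarrow> 'f \<Rightarrow> 'e))
     \<Rightarrow> 'c \<Rightarrow> ((('q \<Rightarrow> 'd) \<times> ('q \<Rightarrow> unit \<Rightarrow> 'f)) \<Rightarrow> (('p \<Rightarrow> 'd) \<times> ('p \<Rightarrow> unit \<Rightarrow> 'e)))
            \<times> ((('q \<Rightarrow> 'd) \<times> ('q \<Rightarrow> unit \<Rightarrow> 'f)) \<Rightarrow> 'p \<times> unit \<Rightarrow> 'q \<times> unit)" where
  "dual_mor C D m n F = (\<lambda>a.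
     (\<lambda>\<phi>. if \<phi> \<in> pos (dual C D n) a then compnat m (bot C D) a (F a) \<phi> else undefined,
      \<lambda>\<phi>. if \<phi> \<in> pos (dual C D n) a then
             (\<lambda>ie. if ie \<in> dir (dual C D m) a (compnat m (bot C D) a (F a) \<phi>)
                   then (fst (F a) (fst ie), snd ie) else undefined)
           else undefined))"

definition dual_functor :: "'c set \<Rightarrow> 'd set \<Rightarrow> (('c, 'p, 'e, 'd) bicomod \<Rightarrow> bool)
     \<Rightarrow> (('c, ('p \<Rightarrow> 'd) \<times> ('p \<Rightarrow> unit \<Rightarrow> 'e), 'p \<times> unit, 'd) bicomod \<Rightarrow> bool) \<Rightarrow> bool" where
  "dual_functor C D P Q \<longleftrightarrow>
     (\<forall>m. P m \<longrightarrow> Q (dual C D m)) \<and>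
     (\<forall>m n F. P m \<longrightarrow> P n \<longrightarrow> mor C m n F \<longrightarrow>
        mor C (dual C D n) (dual C D m) (dual_mor C D m n F)) \<and>
     (\<forall>m. P m \<longrightarrow> eqm C (dual_mor C D m m (idm m)) (idm (dual C D m))) \<and>
     (\<forall>m n p F G. P m \<longrightarrow> P n \<longrightarrow> P p \<longrightarrow> mor C m n F \<longrightarrow> mor C n p G \<longrightarrow>
        eqm C (dual_mor C D m p (compm m p G F))
              (compm (dual C D p) (dual C D m) (dual_mor C D m n F) (dual_mor C D n p G)))"

definition dual_unit_iso :: "'c set \<Rightarrow> 'd set \<Rightarrow> (('c, 'p, 'e, 'd) bicomod \<Rightarrow> bool) \<Rightarrow> bool" where
  "dual_unit_iso C D P \<longleftrightarrow>
     (\<exists>\<eta>. (\<forall>m. P m \<longrightarrow> iso_mor C m (dual C D (dual C D m)) (\<eta> m)) \<and>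
          (\<forall>m n F. P m \<longrightarrow> P n \<longrightarrow> mor C m n F \<longrightarrow>
             eqm C (compm m (dual C D (dual C D n)) (\<eta> n) F)
                   (compm m (dual C D (dual C D n))
                      (dual_mor C D (dual C D n) (dual C D m) (dual_mor C D m n F)) (\<eta> m))))"

text \<open>The bicomodules of a span C <- M -> D (legs s, t):
  linear  sum_a M_a y   and conjunctive  sum_a y^(M_a).\<close>
definition lin_of :: "'m set \<Rightarrow> ('m \<Rightarrow> 'c) \<Rightarrow> ('m \<Rightarrow> 'd) \<Rightarrow> ('c, 'm, unit, 'd) bicomod" where
  "lin_of M s t = \<lparr> pos = (\<lambda>a. {x \<in> M. s x = a}),
                    dir = (\<lambda>a x. {()}),
                    lab = (\<lambda>a x u. t x) \<rparr>"

definition conj_of :: "'c set \<Rightarrow> 'm set \<Rightarrow> ('m \<Rightarrow> 'c) \<Rightarrow> ('m \<Rightarrow> 'd) \<Rightarrow> ('c, unit, 'm, 'd) bicomod" where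
  "conj_of C M s t = \<lparr> pos = (\<lambda>a. if a \<in> C then {()} else {}),
                       dir = (\<lambda>a u. {x \<in> M. s x = a}),
                       lab = (\<lambda>a u x. t x) \<rparr>"

end

theory Submission
  imports Defs
begin

text \<open>A position of \<open>m\<^sup>\<or>\<close> over \<open>a\<close> is a choice of one direction at every position of \<open>m\<close>
  over \<open>a\<close> (its \<open>D\<close>-label is then forced), and its directions are the positions of \<open>m\<close> over \<open>a\<close>.
  Hence dualising exchanges "one position" and "one direction at each position": the dual of
  \<open>\<Sum>\<^sub>a \<^bold>y\<^bsup>M\<^sub>a\<^esup>\<close> has positions \<open>M\<^sub>a\<close> with one direction each, and the dual of \<open>\<Sum>\<^sub>a M\<^sub>a \<^bold>y\<close>
  has the single position over \<open>a\<close> with directions \<open>M\<^sub>a\<close>. Applying this twice, the evaluation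
  map \<open>i \<mapsto> (\<phi> \<mapsto> \<phi>(i))\<close> into the double dual is bijective on positions and on directions
  in both cases, hence an isomorphism; functoriality and naturality are bookkeeping about
  precomposition.\<close>

section \<open>Morphisms of polynomials over \<open>D\<close>\<close>

lemma natD_iff: "\<phi> \<in> natD q r a \<longleftrightarrow>
      (\<forall>i\<in>pos q a. fst \<phi> i \<in> pos r a \<and>
          (\<forall>e\<in>dir r a (fst \<phi> i). snd \<phi> i e \<in> dir q a i \<and> lab q a i (snd \<phi> i e) = lab r a (fst \<phi> i) e)) \<and>
      (\<forall>i. i \<notin> pos q a \<longrightarrow> fst \<phi> i = undefined \<and> snd \<phi> i = undefined) \<and>
      (\<forall>i\<in>pos q a. \<forall>e. e \<notin> dir r a (fst \<phi> i) \<longrightarrow> snd \<phi> i e = undefined)"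
  by (simp add: natD_def case_prod_beta)

lemma compnat_in_natD:
  assumes "\<psi> \<in> natD m n a" "\<phi> \<in> natD n p a"
  shows "compnat m p a \<psi> \<phi> \<in> natD m p a"
  using assms unfolding natD_iff compnat_def by simp

lemma compnat_assoc:
  assumes "\<psi> \<in> natD m n a" "\<chi> \<in> natD n p a" "\<phi> \<in> natD p r a"
  shows "compnat m r a (compnat m p a \<psi> \<chi>) \<phi> = compnat m r a \<psi> (compnat n r a \<chi> \<phi>)"
  using assms unfolding natD_iff compnat_def by (auto intro!: ext)

lemma compnat_idm_left:
  assumes "\<phi> \<in> natD m p a"
  shows "compnat m p a (idm m a) \<phi> = \<phi>"
  using assms unfolding natD_iff compnat_def idm_def by (auto intro!: ext simp: prod_eq_iff)

definition bij_natD :: "('c, 'p, 'e, 'd) bicomod \<Rightarrow> ('c, 'q, 'f, 'd) bicomod \<Rightarrow> 'c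
     \<Rightarrow> ('p \<Rightarrow> 'q) \<times> ('p \<Rightarrow> 'f \<Rightarrow> 'e) \<Rightarrow> bool" where
  "bij_natD m n a F \<longleftrightarrow> bij_betw (fst F) (pos m a) (pos n a) \<and>
     (\<forall>i\<in>pos m a. bij_betw (snd F i) (dir n a (fst F i)) (dir m a i))"

definition inv_natD :: "('c, 'p, 'e, 'd) bicomod \<Rightarrow> ('c, 'q, 'f, 'd) bicomod \<Rightarrow> 'c
     \<Rightarrow> ('p \<Rightarrow> 'q) \<times> ('p \<Rightarrow> 'f \<Rightarrow> 'e) \<Rightarrow> ('q \<Rightarrow> 'p) \<times> ('q \<Rightarrow> 'e \<Rightarrow> 'f)" where
  "inv_natD m n a F =
     (\<lambda>j. if j \<in> pos n a then inv_into (pos m a) (fst F) j else undefined,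
      \<lambda>j. if j \<in> pos n a then
             (\<lambda>e. if e \<in> dir m a (inv_into (pos m a) (fst F) j)
                  then inv_into (dir n a j) (snd F (inv_into (pos m a) (fst F) j)) e else undefined)
           else undefined)"

lemma inv_natD_inverse:
  assumes F: "F \<in> natD m n a" and B: "bij_natD m n a F"
  shows "inv_natD m n a F \<in> natD n m a"
    and "compnat m m a F (inv_natD m n a F) = idm m a"
    and "compnat n n a (inv_natD m n a F) F = idm n a"
proof -
  let ?f' = "inv_into (pos m a) (fst F)"
  let ?g' = "\<lambda>j. inv_into (dir n a j) (snd F (?f' j))"
  have f_in: "\<And>i. i \<in> pos m a \<Longrightarrow> fst F i \<in> pos n a"
    and g_in: "\<And>i e. i \<in> pos m a \<Longrightarrow> e \<in> dir n a (fst F i) \<Longrightarrow> snd F i e \<in> dir m a i"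
    and lab_F: "\<And>i e. i \<in> pos m a \<Longrightarrow> e \<in> dir n a (fst F i) \<Longrightarrow>
      lab m a i (snd F i e) = lab n a (fst F i) e"
    using F by (simp_all add: natD_iff)
  have bf: "bij_betw (fst F) (pos m a) (pos n a)"
    and bg: "\<And>i. i \<in> pos m a \<Longrightarrow> bij_betw (snd F i) (dir n a (fst F i)) (dir m a i)"
    using B by (auto simp: bij_natD_def)
  then have f'_in: "\<And>j. j \<in> pos n a \<Longrightarrow> ?f' j \<in> pos m a"
    and f_f': "\<And>j. j \<in> pos n a \<Longrightarrow> fst F (?f' j) = j"
    and f'_f: "\<And>i. i \<in> pos m a \<Longrightarrow> ?f' (fst F i) = i"
    by (auto simp: bij_betw_def intro: inv_into_into f_inv_into_f inv_into_f_f)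
  have g'_in: "?g' j e \<in> dir n a j" and g_g': "snd F (?f' j) (?g' j e) = e"
    if j: "j \<in> pos n a" and e: "e \<in> dir m a (?f' j)" for j e
  proof -
    have "bij_betw (snd F (?f' j)) (dir n a j) (dir m a (?f' j))"
      using bg[OF f'_in[OF j]] f_f'[OF j] by simp
    then show "?g' j e \<in> dir n a j" "snd F (?f' j) (?g' j e) = e"
      using e by (auto simp: bij_betw_def intro: inv_into_into f_inv_into_f)
  qed
  have g'_g: "\<And>j e. j \<in> pos n a \<Longrightarrow> e \<in> dir n a j \<Longrightarrow> ?g' j (snd F (?f' j) e) = e"
    using bg f'_in f_f' by (metis bij_betw_def inv_into_f_f)
  show "inv_natD m n a F \<in> natD n m a"
    unfolding natD_iff
  proof (intro conjI ballI allI impI)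
    fix j e assume j: "j \<in> pos n a" and "e \<in> dir m a (fst (inv_natD m n a F) j)"
    then have e: "e \<in> dir m a (?f' j)" by (simp add: inv_natD_def)
    have "lab m a (?f' j) (snd F (?f' j) (?g' j e)) = lab n a (fst F (?f' j)) (?g' j e)"
      using lab_F f'_in[OF j] g'_in[OF j e] f_f'[OF j] by simp
    then show "lab n a j (snd (inv_natD m n a F) j e) = lab m a (fst (inv_natD m n a F) j) e"
      using j e f_f'[OF j] g_g'[OF j e] by (simp add: inv_natD_def)
  qed (use g'_in f'_in in \<open>auto simp: inv_natD_def\<close>)
  have "snd F i (?g' (fst F i) e) = e" if "i \<in> pos m a" "e \<in> dir m a i" for i e
    using g_g'[of "fst F i" e] f_in f'_f that by simp
  then show "compnat m m a F (inv_natD m n a F) = idm m a"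
    using f_in f'_f by (auto intro!: ext simp: compnat_def idm_def inv_natD_def)
  have "snd F (?f' j) e \<in> dir m a (?f' j)" if "j \<in> pos n a" "e \<in> dir n a j" for j e
    using g_in[of "?f' j" e] f'_in f_f' that by simp
  then show "compnat n n a (inv_natD m n a F) F = idm n a"
    using f'_in f_f' g'_g by (auto intro!: ext simp: compnat_def idm_def inv_natD_def)
qed

lemma iso_morI:
  assumes "mor C m n F" "\<And>a. a \<in> C \<Longrightarrow> bij_natD m n a (F a)"
  shows "iso_mor C m n F"
  unfolding iso_mor_def
proof (intro conjI exI)
  let ?G = "\<lambda>a. inv_natD m n a (F a)"
  have "F a \<in> natD m n a" if "a \<in> C" for a
    using assms(1) that by (simp add: mor_def)
  note inv = inv_natD_inverse[OF this assms(2)]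
  show "mor C m n F" by (fact assms(1))
  show "mor C n m ?G" using inv by (simp add: mor_def)
  show "eqm C (compm m m ?G F) (idm m)" "eqm C (compm n n F ?G) (idm n)"
    using inv by (simp_all add: eqm_def compm_def)
qed

section \<open>Positions of the dual\<close>

lemma pos_dual: "pos (dual C D m) a = (if a \<in> C then natD m (bot C D) a else {})"
  by (simp add: dual_def ihom_def)

lemma dir_dual: "dir (dual C D m) a \<phi> = {(i, u). i \<in> pos m a}"
  by (simp add: dual_def ihom_def bot_def)

lemma lab_dual: "lab (dual C D m) a \<phi> x = fst \<phi> (fst x)"
  by (simp add: dual_def ihom_def bot_def)

lemma natD_bot_iff:
  assumes "a \<in> C"
  shows "\<phi> \<in> natD m (bot C D) a \<longleftrightarrow>
    (\<forall>i\<in>pos m a. fst \<phi> i \<in> D \<and> snd \<phi> i () \<in> dir m a i \<and> lab m a i (snd \<phi> i ()) = fst \<phi> i) \<and>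
    (\<forall>i. i \<notin> pos m a \<longrightarrow> fst \<phi> i = undefined \<and> snd \<phi> i = undefined)"
  using assms by (auto simp: natD_iff bot_def)

type_synonym ('p, 'e, 'd) dual_pos = "('p \<Rightarrow> 'd) \<times> ('p \<Rightarrow> unit \<Rightarrow> 'e)"

definition dual_point :: "('c, 'p, 'e, 'd) bicomod \<Rightarrow> 'c \<Rightarrow> ('p \<Rightarrow> 'e) \<Rightarrow> ('p, 'e, 'd) dual_pos" where
  "dual_point m a c = (\<lambda>i. if i \<in> pos m a then lab m a i (c i) else undefined,
                       \<lambda>i. if i \<in> pos m a then (\<lambda>_. c i) else undefined)"

lemma dual_point_in_pos_dual:
  assumes "wf_bicomod C D m" "a \<in> C" "\<And>i. i \<in> pos m a \<Longrightarrow> c i \<in> dir m a i"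
  shows "dual_point m a c \<in> pos (dual C D m) a"
  using assms by (auto simp: pos_dual natD_bot_iff dual_point_def wf_bicomod_def)

lemma dual_point_cong:
  "(\<And>i. i \<in> pos m a \<Longrightarrow> c i = c' i) \<Longrightarrow> dual_point m a c = dual_point m a c'"
  by (auto simp: dual_point_def intro!: ext)

lemma pos_dual_eq_dual_point:
  assumes "a \<in> C" "\<phi> \<in> pos (dual C D m) a"
  shows "\<phi> = dual_point m a (\<lambda>i. snd \<phi> i ())"
  using assms by (auto simp: pos_dual natD_bot_iff dual_point_def prod_eq_iff intro!: ext)

lemma pos_dual_eqI:
  assumes "a \<in> C" "\<phi> \<in> pos (dual C D m) a" "\<psi> \<in> pos (dual C D m) a"
    and "\<And>i. i \<in> pos m a \<Longrightarrow> snd \<phi> i () = snd \<psi> i ()"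
  shows "\<phi> = \<psi>"
  using pos_dual_eq_dual_point[OF assms(1,2)] pos_dual_eq_dual_point[OF assms(1,3)]
    dual_point_cong[of m a "\<lambda>i. snd \<phi> i ()" "\<lambda>i. snd \<psi> i ()"] assms(4)
  by simp

lemma wf_bicomod_dual: "wf_bicomod C D (dual C D m)"
  by (auto simp: wf_bicomod_def pos_dual dir_dual lab_dual natD_bot_iff)

lemma lin_bicomod_dual:
  assumes "conj_bicomod C D m"
  shows "lin_bicomod C D (dual C D m)"
  using assms wf_bicomod_dual[of C D m]
  by (auto simp: lin_bicomod_def conj_bicomod_def dir_dual) blast

lemma conj_bicomod_dual:
  assumes "lin_bicomod C D m"
  shows "conj_bicomod C D (dual C D m)"
  unfolding conj_bicomod_def
proof (intro conjI ballI wf_bicomod_dual)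
  fix a assume a: "a \<in> C"
  let ?c = "\<lambda>i. THE e. e \<in> dir m a i"
  have unique: "\<And>i. i \<in> pos m a \<Longrightarrow> \<exists>!e. e \<in> dir m a i"
    using assms a by (simp add: lin_bicomod_def)
  then have c: "\<And>i. i \<in> pos m a \<Longrightarrow> ?c i \<in> dir m a i"
    by (metis theI')
  have "dual_point m a ?c \<in> pos (dual C D m) a"
    using assms a c by (intro dual_point_in_pos_dual) (simp_all add: lin_bicomod_def)
  moreover have "\<phi> = dual_point m a ?c" if "\<phi> \<in> pos (dual C D m) a" for \<phi>
  proof -
    have "snd \<phi> i () = ?c i" if i: "i \<in> pos m a" for i
    proof (rule the1_equality[symmetric, OF unique[OF i]])
      show "snd \<phi> i () \<in> dir m a i"
        using \<open>\<phi> \<in> pos (dual C D m) a\<close> a i by (simp add: pos_dual natD_bot_iff)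
    qed
    then have "dual_point m a (\<lambda>i. snd \<phi> i ()) = dual_point m a ?c"
      by (rule dual_point_cong)
    with pos_dual_eq_dual_point[OF a that] show ?thesis by simp
  qed
  ultimately show "\<exists>!\<phi>. \<phi> \<in> pos (dual C D m) a" by blast
qed

section \<open>Functoriality of the dual\<close>

lemma mor_dual_mor:
  assumes "mor C m n F"
  shows "mor C (dual C D n) (dual C D m) (dual_mor C D m n F)"
  unfolding mor_def
proof
  fix a assume a: "a \<in> C"
  have Fa: "F a \<in> natD m n a" using assms a by (simp add: mor_def)
  then have F_in: "fst (F a) i \<in> pos n a" if "i \<in> pos m a" for i
    using that by (simp add: natD_iff)
  show "dual_mor C D m n F a \<in> natD (dual C D n) (dual C D m) a"
    unfolding natD_iff
  proof (intro conjI ballI allI impI)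
    fix \<phi> assume \<phi>: "\<phi> \<in> pos (dual C D n) a"
    then show "fst (dual_mor C D m n F a) \<phi> \<in> pos (dual C D m) a"
      using a compnat_in_natD[OF Fa] by (simp add: dual_mor_def pos_dual)
    fix x assume "x \<in> dir (dual C D m) a (fst (dual_mor C D m n F a) \<phi>)"
    then show "snd (dual_mor C D m n F a) \<phi> x \<in> dir (dual C D n) a \<phi>"
      and "lab (dual C D n) a \<phi> (snd (dual_mor C D m n F a) \<phi> x) =
           lab (dual C D m) a (fst (dual_mor C D m n F a) \<phi>) x"
      using \<phi> F_in by (auto simp: dual_mor_def dir_dual lab_dual compnat_def)
  qed (auto simp: dual_mor_def)
qed

lemma dual_mor_idm: "eqm C (dual_mor C D m m (idm m)) (idm (dual C D m))"
  using compnat_idm_left[of _ m "bot C D"]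
  by (auto simp: eqm_def dual_mor_def idm_def[of "dual C D m"] pos_dual dir_dual idm_def intro!: ext)

lemma dual_mor_compm:
  assumes F: "mor C m n F" and G: "mor C n p G"
  shows "eqm C (dual_mor C D m p (compm m p G F))
              (compm (dual C D p) (dual C D m) (dual_mor C D m n F) (dual_mor C D n p G))"
  unfolding eqm_def
proof
  fix a assume a: "a \<in> C"
  have Fa: "F a \<in> natD m n a" and Ga: "G a \<in> natD n p a" using F G a by (simp_all add: mor_def)
  have "fst (F a) i \<in> pos n a" if "i \<in> pos m a" for i
    using Fa that by (simp add: natD_iff)
  moreover have "fst (compnat m p a (F a) (G a)) i = fst (G a) (fst (F a) i)" if "i \<in> pos m a" for i
    using that by (simp add: compnat_def)
  ultimately show "dual_mor C D m p (compm m p G F) a =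
      compm (dual C D p) (dual C D m) (dual_mor C D m n F) (dual_mor C D n p G) a"
    using a compnat_assoc[OF Fa Ga, of _ "bot C D"] compnat_in_natD[OF Ga, of _ "bot C D"]
    by (auto intro!: ext simp: dual_mor_def compm_def compnat_def[of "dual C D p"] pos_dual dir_dual)
qed

lemma dual_functorI:
  assumes "\<And>m. P m \<Longrightarrow> Q (dual C D m)"
  shows "dual_functor C D P Q"
  using assms by (simp add: dual_functor_def mor_dual_mor dual_mor_idm dual_mor_compm)

section \<open>The unit \<open>m \<rightarrow> m\<^sup>\<or>\<^sup>\<or>\<close>\<close>

text \<open>Position \<open>i\<close> goes to evaluation at \<open>i\<close>; a direction there is a position \<open>\<phi>\<close> of \<open>m\<^sup>\<or>\<close>,
  sent back to the direction that \<open>\<phi>\<close> chooses at \<open>i\<close>.\<close>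

definition dual_unit :: "'c set \<Rightarrow> 'd set \<Rightarrow> ('c, 'p, 'e, 'd) bicomod \<Rightarrow> 'c
     \<Rightarrow> ('p \<Rightarrow> (('p, 'e, 'd) dual_pos, 'p \<times> unit, 'd) dual_pos)
        \<times> ('p \<Rightarrow> ('p, 'e, 'd) dual_pos \<times> unit \<Rightarrow> 'e)" where
  "dual_unit C D m a =
     (\<lambda>i. if i \<in> pos m a then dual_point (dual C D m) a (\<lambda>_. (i, ())) else undefined,
      \<lambda>i. if i \<in> pos m a then (\<lambda>x. if fst x \<in> pos (dual C D m) a then snd (fst x) i () else undefined)
          else undefined)"

lemma evaluation_in_pos_dual_dual:
  assumes "a \<in> C" "i \<in> pos m a"
  shows "dual_point (dual C D m) a (\<lambda>_. (i, ())) \<in> pos (dual C D (dual C D m)) a"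
  using assms by (auto simp: dir_dual intro: dual_point_in_pos_dual wf_bicomod_dual)

lemma mor_dual_unit: "mor C m (dual C D (dual C D m)) (dual_unit C D m)"
  unfolding mor_def
proof
  fix a assume a: "a \<in> C"
  show "dual_unit C D m a \<in> natD m (dual C D (dual C D m)) a"
    unfolding natD_iff
  proof (intro conjI ballI allI impI)
    fix i x assume i: "i \<in> pos m a"
      and "x \<in> dir (dual C D (dual C D m)) a (fst (dual_unit C D m a) i)"
    then have "fst x \<in> natD m (bot C D) a" using a by (simp add: dir_dual pos_dual case_prod_beta)
    then show "snd (dual_unit C D m a) i x \<in> dir m a i"
      and "lab m a i (snd (dual_unit C D m a) i x) =
           lab (dual C D (dual C D m)) a (fst (dual_unit C D m a) i) x"
      using a i by (simp_all add: natD_bot_iff dual_unit_def dual_point_def pos_dual lab_dual)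
  qed (use a evaluation_in_pos_dual_dual[OF a, of _ m D] in \<open>auto simp: dual_unit_def dir_dual\<close>)
qed

lemma pos_dual_dual_eq_unit:
  assumes a: "a \<in> C" and \<Phi>: "\<Phi> \<in> pos (dual C D (dual C D m)) a" and i: "i \<in> pos m a"
    and const: "\<And>\<phi>. \<phi> \<in> pos (dual C D m) a \<Longrightarrow> fst (snd \<Phi> \<phi> ()) = i"
  shows "\<Phi> = fst (dual_unit C D m a) i"
proof -
  have "dual_point (dual C D m) a (\<lambda>\<phi>. snd \<Phi> \<phi> ()) = dual_point (dual C D m) a (\<lambda>_. (i, ()))"
    using const by (intro dual_point_cong) (simp add: prod_eq_iff)
  with pos_dual_eq_dual_point[OF a \<Phi>] i show ?thesis
    by (simp add: dual_unit_def)
qed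

lemma dual_unit_natural:
  assumes F: "mor C m n F"
  shows "eqm C (compm m (dual C D (dual C D n)) (dual_unit C D n) F)
               (compm m (dual C D (dual C D n))
                  (dual_mor C D (dual C D n) (dual C D m) (dual_mor C D m n F)) (dual_unit C D m))"
  unfolding eqm_def compm_def
proof
  fix a assume a: "a \<in> C"
  have Fa: "F a \<in> natD m n a" using F a by (simp add: mor_def)
  have F_in: "\<And>i. i \<in> pos m a \<Longrightarrow> fst (F a) i \<in> pos n a" using Fa by (simp add: natD_iff)
  have fst_comp: "\<And>\<phi> i. i \<in> pos m a \<Longrightarrow>
      fst (compnat m (bot C D) a (F a) \<phi>) i = fst \<phi> (fst (F a) i)"
    and snd_comp: "\<And>\<phi> i u. i \<in> pos m a \<Longrightarrow>
      snd (compnat m (bot C D) a (F a) \<phi>) i u = snd (F a) i (snd \<phi> (fst (F a) i) ())"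
    by (simp_all add: compnat_def bot_def)
  have unit_image: "fst (dual_unit C D n a) (fst (F a) i) =
      compnat (dual C D n) (bot C D) a (dual_mor C D m n F a) (fst (dual_unit C D m a) i)"
    if i: "i \<in> pos m a" for i
    using a i F_in compnat_in_natD[OF Fa, of _ "bot C D"] fst_comp snd_comp
    by (auto intro!: ext simp: compnat_def[of "dual C D n"] dual_unit_def dual_point_def dual_mor_def
        pos_dual dir_dual lab_dual bot_def)
  show "compnat m (dual C D (dual C D n)) a (F a) (dual_unit C D n a) =
        compnat m (dual C D (dual C D n)) a (dual_unit C D m a)
          (dual_mor C D (dual C D n) (dual C D m) (dual_mor C D m n F) a)"
  proof (rule prod_eqI)
    show "fst (compnat m (dual C D (dual C D n)) a (F a) (dual_unit C D n a)) =
        fst (compnat m (dual C D (dual C D n)) a (dual_unit C D m a)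
          (dual_mor C D (dual C D n) (dual C D m) (dual_mor C D m n F) a))"
      using unit_image F_in evaluation_in_pos_dual_dual[OF a, of _ m D]
      by (auto intro!: ext simp: compnat_def[of m "dual C D (dual C D n)"] dual_mor_def[of C D "dual C D n"] dual_unit_def)
    show "snd (compnat m (dual C D (dual C D n)) a (F a) (dual_unit C D n a)) =
        snd (compnat m (dual C D (dual C D n)) a (dual_unit C D m a)
          (dual_mor C D (dual C D n) (dual C D m) (dual_mor C D m n F) a))"
      using unit_image F_in evaluation_in_pos_dual_dual[OF a, of _ m D] a compnat_in_natD[OF Fa, of _ "bot C D"] snd_comp
      by (auto intro!: ext simp: compnat_def[of m "dual C D (dual C D n)"] dual_unit_def dir_dual pos_dual dual_mor_def)
  qed
qed

lemma bij_natD_dual_unit_conj: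
  assumes m: "conj_bicomod C D m" and a: "a \<in> C"
  shows "bij_natD m (dual C D (dual C D m)) a (dual_unit C D m a)"
proof -
  obtain i0 where i0: "pos m a = {i0}"
    using m a unfolding conj_bicomod_def by blast
  have "pos (dual C D (dual C D m)) a = {fst (dual_unit C D m a) i0}"
  proof (intro equalityI subsetI)
    fix \<Phi> assume \<Phi>: "\<Phi> \<in> pos (dual C D (dual C D m)) a"
    then have "fst (snd \<Phi> \<phi> ()) = i0" if "\<phi> \<in> pos (dual C D m) a" for \<phi>
      using a that i0 by (auto simp: pos_dual natD_bot_iff dir_dual case_prod_beta)
    with pos_dual_dual_eq_unit[OF a \<Phi>] i0 show "\<Phi> \<in> {fst (dual_unit C D m a) i0}" by auto
  qed (use a i0 evaluation_in_pos_dual_dual[OF a, of i0 m D] in \<open>simp add: dual_unit_def\<close>)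
  moreover have "bij_betw (snd (dual_unit C D m a) i0)
      (dir (dual C D (dual C D m)) a (fst (dual_unit C D m a) i0)) (dir m a i0)"
  proof (rule bij_betwI')
    fix x y assume "x \<in> dir (dual C D (dual C D m)) a (fst (dual_unit C D m a) i0)"
      and "y \<in> dir (dual C D (dual C D m)) a (fst (dual_unit C D m a) i0)"
    then have "fst x \<in> pos (dual C D m) a" "fst y \<in> pos (dual C D m) a"
      by (auto simp: dir_dual)
    then show "snd (dual_unit C D m a) i0 x = snd (dual_unit C D m a) i0 y \<longleftrightarrow> x = y"
      using pos_dual_eqI[OF a, of "fst x" D m "fst y"] i0 by (auto simp: dual_unit_def prod_eq_iff)
  next
    fix x assume "x \<in> dir (dual C D (dual C D m)) a (fst (dual_unit C D m a) i0)"
    then show "snd (dual_unit C D m a) i0 x \<in> dir m a i0"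
      using a i0 by (auto simp: dir_dual dual_unit_def pos_dual natD_bot_iff)
  next
    fix e assume e: "e \<in> dir m a i0"
    have "dual_point m a (\<lambda>_. e) \<in> pos (dual C D m) a"
      using m a e i0 by (intro dual_point_in_pos_dual) (auto simp: conj_bicomod_def)
    then show "\<exists>x \<in> dir (dual C D (dual C D m)) a (fst (dual_unit C D m a) i0).
        e = snd (dual_unit C D m a) i0 x"
      using i0 by (intro bexI[of _ "(dual_point m a (\<lambda>_. e), ())"])
        (auto simp: dir_dual dual_unit_def dual_point_def)
  qed
  ultimately show ?thesis
    using i0 by (simp add: bij_natD_def)
qed

lemma bij_natD_dual_unit_lin:
  assumes m: "lin_bicomod C D m" and a: "a \<in> C"
  shows "bij_natD m (dual C D (dual C D m)) a (dual_unit C D m a)"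
proof -
  obtain \<phi>0 where \<phi>0: "pos (dual C D m) a = {\<phi>0}"
    using conj_bicomod_dual[OF m] a unfolding conj_bicomod_def by blast
  have "bij_betw (fst (dual_unit C D m a)) (pos m a) (pos (dual C D (dual C D m)) a)"
  proof (rule bij_betwI')
    fix i j assume "i \<in> pos m a" "j \<in> pos m a"
    moreover have "snd (fst (dual_unit C D m a) k) \<phi>0 () = (k, ())" if "k \<in> pos m a" for k
      using that \<phi>0 by (simp add: dual_unit_def dual_point_def)
    ultimately show "fst (dual_unit C D m a) i = fst (dual_unit C D m a) j \<longleftrightarrow> i = j"
      by (metis prod.inject)
  next
    fix i assume "i \<in> pos m a"
    then show "fst (dual_unit C D m a) i \<in> pos (dual C D (dual C D m)) a"
      using evaluation_in_pos_dual_dual[OF a] by (simp add: dual_unit_def)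
  next
    fix \<Phi> assume \<Phi>: "\<Phi> \<in> pos (dual C D (dual C D m)) a"
    define i where "i = fst (snd \<Phi> \<phi>0 ())"
    have i: "i \<in> pos m a"
      using a \<Phi> \<phi>0 by (auto simp: i_def pos_dual natD_bot_iff dir_dual case_prod_beta)
    moreover have "\<Phi> = fst (dual_unit C D m a) i"
      using pos_dual_dual_eq_unit[OF a \<Phi> i] \<phi>0 by (simp add: i_def)
    ultimately show "\<exists>i \<in> pos m a. \<Phi> = fst (dual_unit C D m a) i" by blast
  qed
  moreover have "dir m a i = {snd \<phi>0 i ()}" if i: "i \<in> pos m a" for i
  proof -
    have "snd \<phi>0 i () \<in> dir m a i"
      using a i \<phi>0 natD_bot_iff[OF a, of \<phi>0 m D] by (simp add: pos_dual)
    moreover have "\<exists>!e. e \<in> dir m a i"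
      using m a i by (simp add: lin_bicomod_def)
    ultimately show ?thesis by blast
  qed
  moreover have "dir (dual C D (dual C D m)) a \<Phi> = {(\<phi>0, ())}" for \<Phi>
    using \<phi>0 by (auto simp: dir_dual)
  ultimately show ?thesis
    using \<phi>0 by (simp add: bij_natD_def dual_unit_def)
qed

lemma dual_unit_isoI:
  assumes "\<And>m a. P m \<Longrightarrow> a \<in> C \<Longrightarrow> bij_natD m (dual C D (dual C D m)) a (dual_unit C D m a)"
  shows "dual_unit_iso C D P"
  unfolding dual_unit_iso_def
  using assms by (intro exI[of _ "dual_unit C D"] conjI allI impI iso_morI mor_dual_unit dual_unit_natural)

section \<open>Spans\<close>

lemma lin_bicomod_lin_of:
  "s ` M \<subseteq> C \<Longrightarrow> t ` M \<subseteq> D \<Longrightarrow> lin_bicomod C D (lin_of M s t)"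
  by (auto simp: lin_bicomod_def wf_bicomod_def lin_of_def)

lemma conj_bicomod_conj_of:
  "s ` M \<subseteq> C \<Longrightarrow> t ` M \<subseteq> D \<Longrightarrow> conj_bicomod C D (conj_of C M s t)"
  by (auto simp: conj_bicomod_def wf_bicomod_def conj_of_def)

lemma dual_lin_of_iso_conj_of:
  assumes "s ` M \<subseteq> C" "t ` M \<subseteq> D"
  shows "\<exists>F. iso_mor C (dual C D (lin_of M s t)) (conj_of C M s t) F"
proof -
  let ?L = "lin_of M s t" and ?K = "conj_of C M s t"
  define F where "F = (\<lambda>a. (\<lambda>\<phi>. if \<phi> \<in> pos (dual C D ?L) a then () else undefined,
      \<lambda>\<phi>. if \<phi> \<in> pos (dual C D ?L) a then (\<lambda>x. if x \<in> dir ?K a () then (x, ()) else undefined)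
          else undefined))"
  have "F a \<in> natD (dual C D ?L) ?K a" if "a \<in> C" for a
    unfolding natD_iff
    using that by (auto simp: F_def conj_of_def lin_of_def dir_dual lab_dual pos_dual natD_bot_iff)
  then have "mor C (dual C D ?L) ?K F"
    by (simp add: mor_def)
  moreover have "bij_natD (dual C D ?L) ?K a (F a)" if a: "a \<in> C" for a
  proof -
    obtain \<phi>0 where \<phi>0: "pos (dual C D ?L) a = {\<phi>0}"
      using conj_bicomod_dual[OF lin_bicomod_lin_of[OF assms]] a unfolding conj_bicomod_def by blast
    have "bij_betw (fst (F a)) (pos (dual C D ?L) a) (pos ?K a)"
      using a \<phi>0 by (simp add: F_def conj_of_def)
    moreover have "bij_betw (snd (F a) \<phi>0) (dir ?K a (fst (F a) \<phi>0)) (dir (dual C D ?L) a \<phi>0)"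
      using \<phi>0 by (auto simp: bij_betw_def inj_on_def F_def dir_dual conj_of_def lin_of_def image_iff)
    ultimately show ?thesis
      using \<phi>0 by (simp add: bij_natD_def)
  qed
  ultimately show ?thesis
    by (blast intro: iso_morI)
qed

lemma dual_conj_of_iso_lin_of:
  assumes "s ` M \<subseteq> C" "t ` M \<subseteq> D"
  shows "\<exists>G. iso_mor C (dual C D (conj_of C M s t)) (lin_of M s t) G"
proof -
  let ?L = "lin_of M s t" and ?K = "conj_of C M s t"
  define G where "G = (\<lambda>a. (\<lambda>\<phi>. if \<phi> \<in> pos (dual C D ?K) a then snd \<phi> () () else undefined,
      \<lambda>\<phi>. if \<phi> \<in> pos (dual C D ?K) a then (\<lambda>u. if u \<in> dir ?L a (snd \<phi> () ()) then ((), ()) else undefined)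
          else undefined))"
  have "G a \<in> natD (dual C D ?K) ?L a" if "a \<in> C" for a
    unfolding natD_iff
    using that by (auto simp: G_def conj_of_def lin_of_def dir_dual lab_dual pos_dual natD_bot_iff)
  then have "mor C (dual C D ?K) ?L G"
    by (simp add: mor_def)
  moreover have "bij_natD (dual C D ?K) ?L a (G a)" if a: "a \<in> C" for a
  proof -
    have pos_K: "pos ?K a = {()}" using a by (simp add: conj_of_def)
    have "bij_betw (fst (G a)) (pos (dual C D ?K) a) (pos ?L a)"
    proof (rule bij_betwI')
      fix \<phi> \<psi> assume "\<phi> \<in> pos (dual C D ?K) a" "\<psi> \<in> pos (dual C D ?K) a"
      then show "fst (G a) \<phi> = fst (G a) \<psi> \<longleftrightarrow> \<phi> = \<psi>"
        using pos_dual_eqI[OF a, of \<phi> D ?K \<psi>] pos_K by (auto simp: G_def)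
    next
      fix \<phi> assume "\<phi> \<in> pos (dual C D ?K) a"
      then show "fst (G a) \<phi> \<in> pos ?L a"
        using a by (auto simp: G_def pos_dual natD_bot_iff conj_of_def lin_of_def)
    next
      fix x assume x: "x \<in> pos ?L a"
      have "dual_point ?K a (\<lambda>_. x) \<in> pos (dual C D ?K) a"
        using a x conj_bicomod_conj_of[OF assms]
        by (intro dual_point_in_pos_dual) (auto simp: conj_bicomod_def conj_of_def lin_of_def)
      then show "\<exists>\<phi> \<in> pos (dual C D ?K) a. x = fst (G a) \<phi>"
        using pos_K by (intro bexI) (auto simp: G_def dual_point_def)
    qed
    moreover have "dir ?L a x = {()}" "dir (dual C D ?K) a \<phi> = {((), ())}" for x \<phi>
      using pos_K by (auto simp: lin_of_def dir_dual)
    ultimately show ?thesis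
      by (simp add: bij_natD_def G_def)
  qed
  ultimately show ?thesis
    by (blast intro: iso_morI)
qed

theorem theorem2p50:
  fixes C :: "'c set" and D :: "'d set"
  shows "dual_functor C D (conj_bicomod C D :: ('c, 'p, 'e, 'd) bicomod \<Rightarrow> bool) (lin_bicomod C D)
       \<and> dual_functor C D (lin_bicomod C D :: ('c, 'q, 'f, 'd) bicomod \<Rightarrow> bool) (conj_bicomod C D)
       \<and> dual_unit_iso C D (conj_bicomod C D :: ('c, 'p, 'e, 'd) bicomod \<Rightarrow> bool)
       \<and> dual_unit_iso C D (lin_bicomod C D :: ('c, 'q, 'f, 'd) bicomod \<Rightarrow> bool)
       \<and> (\<forall>(M :: 'm set) (s :: 'm \<Rightarrow> 'c) (t :: 'm \<Rightarrow> 'd). s ` M \<subseteq> C \<longrightarrow> t ` M \<subseteq> D \<longrightarrow>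
            (\<exists>F. iso_mor C (dual C D (lin_of M s t)) (conj_of C M s t) F) \<and>
            (\<exists>G. iso_mor C (dual C D (conj_of C M s t)) (lin_of M s t) G))"
  by (intro conjI allI impI dual_functorI dual_unit_isoI lin_bicomod_dual conj_bicomod_dual
      bij_natD_dual_unit_conj bij_natD_dual_unit_lin dual_lin_of_iso_conj_of dual_conj_of_iso_lin_of)

end
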